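(* Let $\tau$ be a trace and $S\in\mathsf{sched}(\tau)$. Let $S'$ be an interleaving with $S'\notin\mathsf{sched}(\tau)$. Then $S\not\approx S'$.
   Context: Setting: a generic asynchronous message-passing language. There are pairwise disjoint domains of process identifiers (pids), message values, and message tags, a domain of constraints, and a decidable function $\mathsf{match}$ with $\mathsf{match}(v,cs)\in\{\mathit{true},\mathit{false}\}$. An event has the form $p\!:\!a$ where $p$ is a pid and $a$ is one of the actions $\mathsf{spawn}(p')$, $\mathsf{send}(\ell,v,p')$ (message with tag $\ell$, value $v$, target $p'$), $\mathsf{rec}(\ell,cs)$ (reception of message with tag $\ell$ by a receive with constraint $cs$). For a finite sequence of events $S=(e_1,\dots,e_n)$, $e_i\prec_S e_j$ means $i<j$, and $\mathsf{actions}(p,S)$ is the sequence of actions of the events of pid $p$ in $S$, in order. A sequence $S=(p_1\!:\!a_1,\dots,p_n\!:\!a_n)$ is an interleaving with initial pid $p_1$ if: (1) each event $p_j\!:\!a_j$ is either preceded in $S$ by an event $p_i\!:\!\mathsf{spawn}(p_j)$ with $p_i\neq p_j$, or $p_j=p_1$; (2) each event $p_j\!:\!\mathsf{rec}(\ell,cs)$ is preceded in $S$ by an event $p_i\!:\!\mathsf{send}(\ell,v,p_j)$ with $\mathsf{match}(v,cs)=\mathit{true}$; (3) for each pair of events $p_i\!:\!\mathsf{send}(\ell,v,p_j)$, $p_j\!:\!\mathsf{rec}(\ell,cs)$ in $S$ and every $p_i\!:\!\mathsf{send}(\ell',v',p_j)\in S$ preceding $p_i\!:\!\mathsf{send}(\ell,v,p_j)$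 in $S$, either $\mathsf{match}(v',cs)=\mathit{false}$ or some event $p_j\!:\!\mathsf{rec}(\ell',cs')\in S$ precedes $p_j\!:\!\mathsf{rec}(\ell,cs)$ in $S$; (4) each pid appears as argument of $\mathsf{spawn}$ in at most one event and each tag appears as argument of $\mathsf{send}$ in at most one event. Happened-before: for an interleaving $S=(e_1,\dots,e_n)$ with $e_i=p_i\!:\!a_i$, $e_j=p_j\!:\!a_j$, $i<j$, we have $e_i\leadsto_S e_j$ if $p_i=p_j$, or $a_i=\mathsf{spawn}(p_j)$, or $a_i=\mathsf{send}(\ell,v,p_j)$ and $a_j=\mathsf{rec}(\ell,cs)$; and $\leadsto_S$ is closed under transitivity. Two events are independent if neither happened before the other. Two interleavings $S_1,S_2$ with the same initial pid are causally equivalent, $S_1\approx S_2$, if $S_2$ can be obtained from $S_1$ by a finite number of swaps of consecutive independent events. For an interleaving $S$ with pids $p_1,\dots,p_n$, $\mathit{tr}(S)=[p_1\mapsto\mathsf{actions}(p_1,S);\dots;p_n\mapsto\mathsf{actions}(p_n,S)]$. A trace with initial pid $p_0$ is a mapping $\tau$ from pids to sequences of actions such that $\tau=\mathit{tr}(S)$ for some interleaving $S$ with initial pid $p_0$. For a trace $\tau$ with initial pid $p_0$, $\mathsf{sched}(\tau)$ is the set of all interleavings $S$ with initial pid $p_0$ such that $\mathit{tr}(S)=\tau$. *)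

theory Defs
  imports Main
begin

(* Pids 'p, values 'v, tags 'l, constraints 'c are distinct type variables
   (hence pairwise disjoint domains). The function match is a parameter. *)

datatype ('p, 'v, 'l, 'c) action =
    Spawn 'p
  | Send 'l 'v 'p
  | Rec 'l 'c

type_synonym ('p, 'v, 'l, 'c) event = "'p \<times> ('p, 'v, 'l, 'c) action"

definition actions :: "'p \<Rightarrow> ('p, 'v, 'l, 'c) event list \<Rightarrow> ('p, 'v, 'l, 'c) action list" where
  "actions p S = map snd (filter (\<lambda>e. fst e = p) S)"

(* Interleaving with initial pid p1 (positions are list indices; e_i \<prec>_S e_j iff i < j) *)
definition interleaving ::
  "('v \<Rightarrow> 'c \<Rightarrow> bool) \<Rightarrow> 'p \<Rightarrow> ('p, 'v, 'l, 'c) event list \<Rightarrow> bool" where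
  "interleaving match p1 S \<longleftrightarrow>
     S \<noteq> [] \<and> fst (S ! 0) = p1 \<and>
     \<comment> \<open>(1)\<close>
     (\<forall>j < length S. fst (S ! j) = p1 \<or>
        (\<exists>i < j. snd (S ! i) = Spawn (fst (S ! j)) \<and> fst (S ! i) \<noteq> fst (S ! j))) \<and>
     \<comment> \<open>(2)\<close>
     (\<forall>j < length S. \<forall>l cs. snd (S ! j) = Rec l cs \<longrightarrow>
        (\<exists>i < j. \<exists>v. snd (S ! i) = Send l v (fst (S ! j)) \<and> match v cs)) \<and>
     \<comment> \<open>(3)\<close>
     (\<forall>k < length S. \<forall>m < length S. \<forall>l v pj cs.
        snd (S ! k) = Send l v pj \<and> fst (S ! m) = pj \<and> snd (S ! m) = Rec l cs \<longrightarrow>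
        (\<forall>k' < k. \<forall>l' v'. fst (S ! k') = fst (S ! k) \<and> snd (S ! k') = Send l' v' pj \<longrightarrow>
           \<not> match v' cs \<or>
           (\<exists>m' < m. fst (S ! m') = pj \<and> (\<exists>cs'. snd (S ! m') = Rec l' cs')))) \<and>
     \<comment> \<open>(4)\<close>
     (\<forall>i < length S. \<forall>j < length S. \<forall>q. snd (S ! i) = Spawn q \<and> snd (S ! j) = Spawn q \<longrightarrow> i = j) \<and>
     (\<forall>i < length S. \<forall>j < length S. \<forall>l v v' q q'.
        snd (S ! i) = Send l v q \<and> snd (S ! j) = Send l v' q' \<longrightarrow> i = j)"

definition hb_step :: "('p, 'v, 'l, 'c) event list \<Rightarrow> nat \<Rightarrow> nat \<Rightarrow> bool" where
  "hb_step S i j \<longleftrightarrow> i < j \<and> j < length S \<and>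
     (fst (S ! i) = fst (S ! j) \<or>
      snd (S ! i) = Spawn (fst (S ! j)) \<or>
      (\<exists>l v cs. snd (S ! i) = Send l v (fst (S ! j)) \<and> snd (S ! j) = Rec l cs))"

definition happened_before :: "('p, 'v, 'l, 'c) event list \<Rightarrow> nat \<Rightarrow> nat \<Rightarrow> bool" where
  "happened_before S = (hb_step S)\<^sup>+\<^sup>+"

definition independent :: "('p, 'v, 'l, 'c) event list \<Rightarrow> nat \<Rightarrow> nat \<Rightarrow> bool" where
  "independent S i j \<longleftrightarrow> \<not> happened_before S i j \<and> \<not> happened_before S j i"

definition swap_step :: "('p, 'v, 'l, 'c) event list \<Rightarrow> ('p, 'v, 'l, 'c) event list \<Rightarrow> bool" where
  "swap_step S S' \<longleftrightarrow> (\<exists>i. Suc i < length S \<and> independent S i (Suc i) \<and>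
      S' = S[i := S ! Suc i, Suc i := S ! i])"

definition causally_equiv ::
  "('v \<Rightarrow> 'c \<Rightarrow> bool) \<Rightarrow> ('p, 'v, 'l, 'c) event list \<Rightarrow> ('p, 'v, 'l, 'c) event list \<Rightarrow> bool" where
  "causally_equiv match S1 S2 \<longleftrightarrow>
     (\<exists>p. interleaving match p S1 \<and> interleaving match p S2) \<and> swap_step\<^sup>*\<^sup>* S1 S2"

definition tr :: "('p, 'v, 'l, 'c) event list \<Rightarrow> 'p \<rightharpoonup> ('p, 'v, 'l, 'c) action list" where
  "tr S = (\<lambda>p. if p \<in> fst ` set S then Some (actions p S) else None)"

definition is_trace ::
  "('v \<Rightarrow> 'c \<Rightarrow> bool) \<Rightarrow> 'p \<Rightarrow> ('p \<rightharpoonup> ('p, 'v, 'l, 'c) action list) \<Rightarrow> bool" where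
  "is_trace match p0 \<tau> \<longleftrightarrow> (\<exists>S. interleaving match p0 S \<and> tr S = \<tau>)"

definition sched ::
  "('v \<Rightarrow> 'c \<Rightarrow> bool) \<Rightarrow> 'p \<Rightarrow> ('p \<rightharpoonup> ('p, 'v, 'l, 'c) action list) \<Rightarrow> ('p, 'v, 'l, 'c) event list set" where
  "sched match p0 \<tau> = {S. interleaving match p0 S \<and> tr S = \<tau>}"

end

theory Submission
  imports Defs
begin

(* Consecutive events of the same process are causally ordered, so a swap of independent
   events only exchanges events of two different processes. Such a swap leaves every
   per-process action sequence, and hence the trace, unchanged; and the initial pid of an
   interleaving is the pid of its first event. Causally equivalent interleavings therefore
   have the same trace and the same initial pid. *)

lemma swap_adjacent_conv_append:
  assumes "Suc i < length xs"
  shows "xs[i := xs ! Suc i, Suc i := xs ! i] = take i xs @ [xs ! Suc i, xs ! i] @ drop (Suc (Suc i)) xs"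
  using assms by (simp add: upd_conv_take_nth_drop Cons_nth_drop_Suc list_update_append)

lemma tr_swap_distinct_pids:
  assumes "fst a \<noteq> fst b"
  shows "tr (xs @ [b, a] @ ys) = tr (xs @ [a, b] @ ys)"
  using assms unfolding tr_def actions_def by (auto simp: fun_eq_iff)

lemma independent_Suc_imp_distinct_pids:
  assumes "Suc i < length S" and "independent S i (Suc i)"
  shows "fst (S ! i) \<noteq> fst (S ! Suc i)"
proof
  assume "fst (S ! i) = fst (S ! Suc i)"
  with assms(1) have "happened_before S i (Suc i)"
    unfolding happened_before_def hb_step_def by blast
  with assms(2) show False
    unfolding independent_def by blast
qed

lemma swap_step_tr:
  assumes "swap_step S S'"
  shows "tr S' = tr S"
proof -
  obtain i where i: "Suc i < length S" "independent S i (Suc i)"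
    and S': "S' = S[i := S ! Suc i, Suc i := S ! i]"
    using assms unfolding swap_step_def by blast
  have "S = take i S @ [S ! i, S ! Suc i] @ drop (Suc (Suc i)) S"
    using i(1) by (simp add: Cons_nth_drop_Suc)
  with S' swap_adjacent_conv_append[OF i(1)] show ?thesis
    using tr_swap_distinct_pids[OF independent_Suc_imp_distinct_pids[OF i]] by metis
qed

lemma swap_steps_tr:
  assumes "swap_step\<^sup>*\<^sup>* S S'"
  shows "tr S' = tr S"
  using assms by induction (auto dest: swap_step_tr)

lemma interleaving_initial_pid_unique:
  assumes "interleaving match p S" and "interleaving match q S"
  shows "p = q"
  using assms unfolding interleaving_def by auto

theorem theorem2:
  fixes match :: "'v \<Rightarrow> 'c \<Rightarrow> bool"
    and \<tau> :: "'p \<rightharpoonup> ('p, 'v, 'l, 'c) action list"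
    and S S' :: "('p, 'v, 'l, 'c) event list"
  assumes "is_trace match p0 \<tau>"
    and "S \<in> sched match p0 \<tau>"
    and "interleaving match p' S'"
    and "S' \<notin> sched match p0 \<tau>"
  shows "\<not> causally_equiv match S S'"
proof
  assume "causally_equiv match S S'"
  then obtain p where p: "interleaving match p S" "interleaving match p S'"
    and swaps: "swap_step\<^sup>*\<^sup>* S S'"
    unfolding causally_equiv_def by blast
  have S: "interleaving match p0 S" "tr S = \<tau>"
    using assms(2) unfolding sched_def by auto
  have "p = p0"
    using interleaving_initial_pid_unique[OF p(1) S(1)] .
  moreover have "tr S' = \<tau>"
    using swap_steps_tr[OF swaps] S(2) by simp
  ultimately show False
    using p(2) assms(4) unfolding sched_def by auto
qed

end
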